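(* Let $X$ be a Baire space, $Y$ a first countable topological space, $(Z,d)$ a metric space and $f:X\times Y\to Z$ a mapping. Suppose that for each $x\in X$, $f_x$ is continuous and $f^y$ is quasicontinuous at $x$ for every $y$ in a dense set $D_x\subset Y$. Then for each $y\in Y$ there is a residual set $R_y\subset X$ such that $f$ is continuous at every point of $R_y\times\{y\}$.
   Context: $f_x(y)=f^y(x)=f(x,y)$. A mapping $g:X\to Z$ is quasicontinuous at $a$ if for each neighborhood $U$ of $a$ and each neighborhood $W$ of $g(a)$ there is an open $O$ with $\emptyset\ne O\subset U$ and $g(O)\subset W$. Residual means containing a countable intersection of dense open sets. *)

theory Defs
  imports "HOL-Analysis.Analysis"
begin

definition baire_space :: "'a::topological_space itself \<Rightarrow> bool" where
  "baire_space _ \<longleftrightarrow>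
     (\<forall>\<F>::'a set set. countable \<F> \<and> (\<forall>U\<in>\<F>. open U \<and> closure U = UNIV)
        \<longrightarrow> closure (\<Inter>\<F>) = UNIV)"

definition residual :: "'a::topological_space set \<Rightarrow> bool" where
  "residual R \<longleftrightarrow>
     (\<exists>\<F>::'a set set. countable \<F> \<and> (\<forall>U\<in>\<F>. open U \<and> closure U = UNIV) \<and> \<Inter>\<F> \<subseteq> R)"

definition quasicont_at :: "('a::topological_space \<Rightarrow> 'b::topological_space) \<Rightarrow> 'a \<Rightarrow> bool" where
  "quasicont_at g a \<longleftrightarrow>
     (\<forall>U W. open U \<and> a \<in> U \<and> open W \<and> g a \<in> W \<longrightarrow>
        (\<exists>V. open V \<and> V \<noteq> {} \<and> V \<subseteq> U \<and> g ` V \<subseteq> W))"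

end

theory Submission
  imports Defs
begin

text \<open>
  Fix \<open>y\<^sub>0\<close> and a countable neighbourhood base \<open>V n\<close> of \<open>y\<^sub>0\<close>.  Call \<open>f\<close>
  \<open>e\<close>-bounded on a box \<open>W \<times> N\<close> if \<open>f\<close> stays within distance \<open>e\<close> of a single point there.
  The key lemma: every nonempty open \<open>U\<close> contains a nonempty open \<open>W\<close> with \<open>f\<close>
  \<open>e\<close>-bounded on some \<open>W \<times> V n\<close>.  Indeed, the sets
  \<open>F n = {x. dist (f (x, y)) (f (x, y\<^sub>0)) \<le> e/3 for all y \<in> V n}\<close> cover the space by
  continuity of the sections \<open>f\<^sub>x\<close>, so by the Baire property some \<open>F n\<close> is dense in an open
  \<open>W\<^sub>0 \<subseteq> U\<close>; quasicontinuity of \<open>f\<^sup>y\<close> at a point of \<open>W\<^sub>0 \<inter> F n\<close> gives an open \<open>G \<subseteq> W\<^sub>0\<close>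
  with \<open>f\<close> \<open>e\<close>-bounded on \<open>(G \<inter> F n) \<times> V n\<close>, and a second use of quasicontinuity
  extends such a bound from \<open>(G \<inter> F n) \<times> V n\<close> to \<open>G \<times> V n\<close>.  Consequently the union of
  all open \<open>W\<close> admitting a \<open>1/(k+1)\<close>-bounded box \<open>W \<times> V n\<close> is open and dense for each \<open>k\<close>;
  the intersection over \<open>k\<close> is residual, and \<open>f\<close> is continuous at \<open>(x, y\<^sub>0)\<close> for each of its
  points \<open>x\<close>.
\<close>

lemma open_subset_closure_meets:
  assumes "open S" "S \<noteq> {}" "S \<subseteq> closure A"
  shows "S \<inter> A \<noteq> {}"
  using open_Int_closure_eq_empty[OF assms(1), of A] assms(2,3) by auto

lemma dense_if_meets_open:
  assumes "\<And>S. open S \<Longrightarrow> S \<noteq> {} \<Longrightarrow> S \<inter> D \<noteq> {}"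
  shows "closure D = UNIV"
proof -
  have "interior (- D) \<inter> D = {}" using interior_subset[of "- D"] by blast
  then have "interior (- D) = {}" using assms[OF open_interior] by blast
  then show ?thesis by (simp add: closure_interior)
qed

lemma baire_spaceD:
  fixes \<F> :: "'a::topological_space set set"
  assumes "baire_space TYPE('a)" "countable \<F>" "\<And>S. S \<in> \<F> \<Longrightarrow> open S \<and> closure S = UNIV"
  shows "closure (\<Inter>\<F>) = UNIV"
proof -
  have "countable \<F> \<and> (\<forall>U\<in>\<F>. open U \<and> closure U = UNIV)" using assms(2,3) by blast
  then show ?thesis using assms(1)[unfolded baire_space_def, THEN spec[of _ \<F>]] by blast
qed

lemma baire_somewhere_dense:
  fixes F :: "nat \<Rightarrow> 'a::topological_space set"
  assumes baire: "baire_space TYPE('a)"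
    and cover: "\<And>x. \<exists>n. x \<in> F n"
    and U: "open U" "U \<noteq> {}"
  shows "\<exists>n W. open W \<and> W \<noteq> {} \<and> W \<subseteq> U \<and> W \<subseteq> closure (F n)"
proof (rule ccontr)
  assume none: "\<not> ?thesis"
  define Ext where "Ext n = - closure (F n \<inter> U)" for n
  have nowhere_dense: "interior (closure (F n \<inter> U)) = {}" for n
  proof -
    let ?W = "interior (closure (F n \<inter> U)) \<inter> U"
    have "?W \<subseteq> closure (F n)"
      using interior_subset closure_mono[of "F n \<inter> U" "F n"] by blast
    moreover have "open ?W" using U(1) by (simp add: open_Int)
    ultimately have "?W = {}" using none by blast
    moreover have "interior (closure (F n \<inter> U)) \<subseteq> closure U"
      using interior_subset closure_mono[of "F n \<inter> U" U] by blast
    ultimately show ?thesis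
      using open_Int_closure_eq_empty[OF open_interior, of "closure (F n \<inter> U)" U] by blast
  qed
  have "open S \<and> closure S = UNIV" if "S \<in> range Ext" for S
    using that nowhere_dense by (auto simp: Ext_def closure_complement)
  then have "closure (\<Inter>(range Ext)) = UNIV"
    by (intro baire_spaceD[OF baire]) auto
  then have "U \<inter> \<Inter>(range Ext) \<noteq> {}" using open_subset_closure_meets[OF U] by simp
  then obtain x where x: "x \<in> U" "x \<in> \<Inter>(range Ext)" by blast
  obtain n where "x \<in> F n" using cover by blast
  with x(1) have "x \<in> closure (F n \<inter> U)" using closure_subset[of "F n \<inter> U"] by blast
  moreover have "x \<in> Ext n" using x(2) by simp
  ultimately show False by (simp add: Ext_def)
qed

lemma quasicont_atD:
  assumes "quasicont_at g a" "open U" "a \<in> U" "open W" "g a \<in> W"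
  shows "\<exists>V. open V \<and> V \<noteq> {} \<and> V \<subseteq> U \<and> g ` V \<subseteq> W"
  using assms(1)[unfolded quasicont_at_def, rule_format, of U W] assms(2-5) by blast

lemma dist_triangle_path:
  fixes a b c d :: "'a::metric_space"
  shows "dist a d \<le> dist a b + dist b c + dist c d"
  using dist_triangle[of a d b] dist_triangle[of b d c] by linarith

definition box_bounded ::
    "('a \<times> 'b \<Rightarrow> 'c::metric_space) \<Rightarrow> 'a set \<Rightarrow> 'b set \<Rightarrow> 'c \<Rightarrow> real \<Rightarrow> bool" where
  "box_bounded f W N c e \<longleftrightarrow> (\<forall>x\<in>W. \<forall>y\<in>N. dist (f (x, y)) c \<le> e)"

text \<open>Under the hypotheses of the theorem, a bound on \<open>(G \<inter> F) \<times> N\<close> extends to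
  \<open>G \<times> N\<close> whenever \<open>F\<close> is dense in the open set \<open>G\<close>: near \<open>(x, y)\<close> choose \<open>y'\<close>
  with \<open>f\<^sup>y'\<close> quasicontinuous at \<open>x\<close>, and use it to reach a point of \<open>F\<close>.\<close>
lemma box_bound_extends:
  fixes f :: "'a::topological_space \<times> 'b::topological_space \<Rightarrow> 'c::metric_space"
  assumes cont: "\<And>x. continuous_on UNIV (\<lambda>y. f (x, y))"
    and qc: "\<And>x. \<exists>D. closure D = UNIV \<and> (\<forall>y\<in>D. quasicont_at (\<lambda>x'. f (x', y)) x)"
    and G: "open G" "G \<subseteq> closure F" and N: "open N"
    and bound: "box_bounded f (G \<inter> F) N c r"
  shows "box_bounded f G N c r"
  unfolding box_bounded_def
proof (intro ballI)
  fix x y assume x: "x \<in> G" and y: "y \<in> N"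
  obtain D where D: "closure D = UNIV" "\<forall>y\<in>D. quasicont_at (\<lambda>x'. f (x', y)) x"
    using qc by blast
  show "dist (f (x, y)) c \<le> r"
  proof (rule field_le_epsilon)
    fix e :: real assume e: "0 < e"
    let ?S = "N \<inter> (\<lambda>y. f (x, y)) -` ball (f (x, y)) (e/2)"
    have "open ?S" using N cont[of x] continuous_on_open_vimage[of UNIV] by auto
    moreover have "y \<in> ?S" using y e by simp
    ultimately have "?S \<inter> D \<noteq> {}" using open_subset_closure_meets[of ?S D] D(1) by blast
    then obtain y' where y': "y' \<in> N" "y' \<in> D" "dist (f (x, y)) (f (x, y')) < e/2"
      by (auto simp: dist_commute)
    have "quasicont_at (\<lambda>x'. f (x', y')) x" using D(2) y'(2) by blast
    then have "\<exists>G'. open G' \<and> G' \<noteq> {} \<and> G' \<subseteq> G \<and>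
                   (\<lambda>x'. f (x', y')) ` G' \<subseteq> ball (f (x, y')) (e/2)"
      by (rule quasicont_atD[OF _ G(1) x open_ball]) (simp_all add: e)
    then obtain G' where G': "open G'" "G' \<noteq> {}" "G' \<subseteq> G"
        "(\<lambda>x'. f (x', y')) ` G' \<subseteq> ball (f (x, y')) (e/2)"
      by blast
    obtain x'' where x'': "x'' \<in> G'" "x'' \<in> F"
      using open_subset_closure_meets[OF G'(1,2)] G'(3) G(2) by blast
    have "dist (f (x, y)) c \<le> dist (f (x, y)) (f (x, y')) + dist (f (x, y')) (f (x'', y'))
                                 + dist (f (x'', y')) c"
      by (rule dist_triangle_path)
    moreover have "dist (f (x, y')) (f (x'', y')) < e/2" using G'(4) x''(1) by auto
    moreover have "dist (f (x'', y')) c \<le> r"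
      using bound G'(3) x'' y'(1) unfolding box_bounded_def by blast
    ultimately show "dist (f (x, y)) c \<le> r + e" using y'(3) by linarith
  qed
qed

lemma small_box_inside_open:
  fixes f :: "'a::topological_space \<times> 'b::topological_space \<Rightarrow> 'c::metric_space"
    and V :: "nat \<Rightarrow> 'b set"
  assumes baire: "baire_space TYPE('a)"
    and cont: "\<And>x. continuous_on UNIV (\<lambda>y. f (x, y))"
    and qc: "\<And>x. \<exists>D. closure D = UNIV \<and> (\<forall>y\<in>D. quasicont_at (\<lambda>x'. f (x', y)) x)"
    and V: "\<And>n. open (V n)" "\<And>n. y0 \<in> V n" "\<And>S. open S \<Longrightarrow> y0 \<in> S \<Longrightarrow> \<exists>n. V n \<subseteq> S"
    and U: "open U" "U \<noteq> {}" and e: "e > 0"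
  shows "\<exists>W n c. open W \<and> W \<noteq> {} \<and> W \<subseteq> U \<and> box_bounded f W (V n) c e"
proof -
  define d where "d = e / 3"
  have d: "d > 0" using e by (simp add: d_def)
  define F where "F n = {x. \<forall>y\<in>V n. dist (f (x, y)) (f (x, y0)) \<le> d}" for n
  have cover: "\<exists>n. x \<in> F n" for x
  proof -
    have "open ((\<lambda>y. f (x, y)) -` ball (f (x, y0)) d)"
      using cont[of x] continuous_on_open_vimage[of UNIV] by auto
    moreover have "y0 \<in> (\<lambda>y. f (x, y)) -` ball (f (x, y0)) d" using d by simp
    ultimately obtain n where "V n \<subseteq> (\<lambda>y. f (x, y)) -` ball (f (x, y0)) d"
      using V(3) by blast
    then have "\<forall>y\<in>V n. dist (f (x, y)) (f (x, y0)) < d" by (auto simp: dist_commute)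
    then have "x \<in> F n" unfolding F_def by (auto intro: less_imp_le)
    then show ?thesis ..
  qed
  obtain n W0 where W0: "open W0" "W0 \<noteq> {}" "W0 \<subseteq> U" "W0 \<subseteq> closure (F n)"
    using baire_somewhere_dense[OF baire cover U] by blast
  obtain x1 where x1: "x1 \<in> W0" "x1 \<in> F n"
    using open_subset_closure_meets[OF W0(1,2,4)] by blast
  obtain D where D: "closure D = UNIV" "\<forall>y\<in>D. quasicont_at (\<lambda>x'. f (x', y)) x1"
    using qc by blast
  obtain y1 where y1: "y1 \<in> V n" "y1 \<in> D"
    using open_subset_closure_meets[OF V(1), of n D] V(2) D(1) by blast
  define c where "c = f (x1, y1)"
  have "quasicont_at (\<lambda>x'. f (x', y1)) x1" using D(2) y1(2) by blast
  then have "\<exists>G. open G \<and> G \<noteq> {} \<and> G \<subseteq> W0 \<and> (\<lambda>x'. f (x', y1)) ` G \<subseteq> ball c d"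
    by (rule quasicont_atD[OF _ W0(1) x1(1) open_ball]) (simp_all add: c_def d)
  then obtain G where G: "open G" "G \<noteq> {}" "G \<subseteq> W0" "(\<lambda>x'. f (x', y1)) ` G \<subseteq> ball c d"
    by blast
  text \<open>On \<open>(G \<inter> F n) \<times> V n\<close> pass through \<open>y\<^sub>0\<close> and \<open>y\<^sub>1\<close>, each step costing at most \<open>d\<close>.\<close>
  have "box_bounded f (G \<inter> F n) (V n) c e"
    unfolding box_bounded_def
  proof (intro ballI)
    fix x y assume x: "x \<in> G \<inter> F n" and y: "y \<in> V n"
    have "dist (f (x, y)) (f (x, y0)) \<le> d" "dist (f (x, y0)) (f (x, y1)) \<le> d"
      using x y y1(1) by (auto simp: F_def dist_commute)
    moreover have "dist (f (x, y1)) c < d" using G(4) x by (auto simp: dist_commute)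
    moreover have "dist (f (x, y)) c \<le> dist (f (x, y)) (f (x, y0)) + dist (f (x, y0)) (f (x, y1))
                                          + dist (f (x, y1)) c"
      by (rule dist_triangle_path)
    ultimately show "dist (f (x, y)) c \<le> e" by (simp add: d_def)
  qed
  moreover have "G \<subseteq> closure (F n)" using G(3) W0(4) by blast
  ultimately have "box_bounded f G (V n) c e"
    using box_bound_extends[OF cont qc G(1) _ V(1)] by blast
  with G(1-3) W0(3) show ?thesis by blast
qed

lemma tendsto_if_small_boxes:
  fixes f :: "'a::topological_space \<times> 'b::topological_space \<Rightarrow> 'c::metric_space"
  assumes "\<And>e. e > 0 \<Longrightarrow> \<exists>W N c. open W \<and> open N \<and> x \<in> W \<and> y \<in> N \<and> box_bounded f W N c e"
  shows "(f \<longlongrightarrow> f (x, y)) (at (x, y))"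
proof (rule tendstoI)
  fix e :: real assume "e > 0"
  then obtain W N c where W: "open W" "open N" "x \<in> W" "y \<in> N" "box_bounded f W N c (e/3)"
    using assms[of "e/3"] by auto
  have "dist (f p) (f (x, y)) < e" if "p \<in> W \<times> N" for p
  proof -
    have "dist (f p) c \<le> e/3" "dist (f (x, y)) c \<le> e/3"
      using W that unfolding box_bounded_def by auto
    then show ?thesis using dist_triangle2[of "f p" "f (x, y)" c] \<open>e > 0\<close> by linarith
  qed
  moreover have "open (W \<times> N)" "(x, y) \<in> W \<times> N" using W by (auto intro: open_Times)
  ultimately show "\<forall>\<^sub>F p in at (x, y). dist (f p) (f (x, y)) < e"
    unfolding eventually_at_topological by blast
qed

definition small_box_points ::
    "('a::topological_space \<times> 'b \<Rightarrow> 'c::metric_space) \<Rightarrow> (nat \<Rightarrow> 'b set) \<Rightarrow> real \<Rightarrow> 'a set" where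
  "small_box_points f V e = \<Union>{W. open W \<and> (\<exists>n c. box_bounded f W (V n) c e)}"

lemma open_small_box_points: "open (small_box_points f V e)"
  by (auto simp: small_box_points_def)

text \<open>Weakening the bound enlarges the set; this lets a sequence \<open>1/(k+1)\<close> serve all \<open>e > 0\<close>.\<close>
lemma small_box_points_mono:
  assumes "e \<le> e'"
  shows "small_box_points f V e \<subseteq> small_box_points f V e'"
proof -
  have "box_bounded f W N c e'" if "box_bounded f W N c e" for W N c
    using that assms unfolding box_bounded_def by (meson order_trans)
  then have "{W. open W \<and> (\<exists>n c. box_bounded f W (V n) c e)}
               \<subseteq> {W. open W \<and> (\<exists>n c. box_bounded f W (V n) c e')}"
    by blast
  then show ?thesis unfolding small_box_points_def by (rule Union_mono)
qed

lemma dense_small_box_points: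
  fixes f :: "'a::topological_space \<times> 'b::topological_space \<Rightarrow> 'c::metric_space"
    and V :: "nat \<Rightarrow> 'b set"
  assumes baire: "baire_space TYPE('a)"
    and cont: "\<And>x. continuous_on UNIV (\<lambda>y. f (x, y))"
    and qc: "\<And>x. \<exists>D. closure D = UNIV \<and> (\<forall>y\<in>D. quasicont_at (\<lambda>x'. f (x', y)) x)"
    and V: "\<And>n. open (V n)" "\<And>n. y0 \<in> V n" "\<And>S. open S \<Longrightarrow> y0 \<in> S \<Longrightarrow> \<exists>n. V n \<subseteq> S"
    and e: "e > 0"
  shows "closure (small_box_points f V e) = UNIV"
proof (rule dense_if_meets_open)
  fix U :: "'a set" assume U: "open U" "U \<noteq> {}"
  obtain W n c where W: "open W" "W \<noteq> {}" "W \<subseteq> U" "box_bounded f W (V n) c e"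
    using small_box_inside_open[OF baire cont qc V U e] by blast
  then have "W \<subseteq> small_box_points f V e" unfolding small_box_points_def by blast
  with W(2,3) show "U \<inter> small_box_points f V e \<noteq> {}" by blast
qed

lemma tendsto_at_small_box_points:
  fixes f :: "'a::topological_space \<times> 'b::topological_space \<Rightarrow> 'c::metric_space"
  assumes V: "\<And>n. open (V n)" "\<And>n. y0 \<in> V n"
    and x: "\<And>e. e > 0 \<Longrightarrow> x \<in> small_box_points f V e"
  shows "(f \<longlongrightarrow> f (x, y0)) (at (x, y0))"
proof (rule tendsto_if_small_boxes)
  fix e :: real assume "e > 0"
  obtain W n c where "open W" "x \<in> W" "box_bounded f W (V n) c e"
    using x[OF \<open>e > 0\<close>] unfolding small_box_points_def by blast
  with V show "\<exists>W N c. open W \<and> open N \<and> x \<in> W \<and> y0 \<in> N \<and> box_bounded f W N c e"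
    by blast
qed

theorem theorem4p1:
  fixes f :: "'a::topological_space \<times> 'b::first_countable_topology \<Rightarrow> 'c::metric_space"
  assumes "baire_space TYPE('a)"
    and "\<And>x. continuous_on UNIV (\<lambda>y. f (x, y))"
    and "\<And>x. \<exists>D. closure D = UNIV \<and> (\<forall>y\<in>D. quasicont_at (\<lambda>x'. f (x', y)) x)"
  shows "\<forall>y. \<exists>R. residual R \<and> (\<forall>x\<in>R. (f \<longlongrightarrow> f (x, y)) (at (x, y)))"
proof
  fix y0 :: 'b
  obtain V :: "nat \<Rightarrow> 'b set" where
    "\<forall>n. y0 \<in> V n \<and> open (V n)" "\<forall>S. open S \<and> y0 \<in> S \<longrightarrow> (\<exists>n. V n \<subseteq> S)"
    using first_countable_basis[of y0] by blast
  then have V: "\<And>n. open (V n)" "\<And>n. y0 \<in> V n" "\<And>S. open S \<Longrightarrow> y0 \<in> S \<Longrightarrow> \<exists>n. V n \<subseteq> S"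
    by auto
  define R where "R = (\<Inter>k. small_box_points f V (1 / Suc k))"
  have "residual R"
    unfolding residual_def R_def
    using open_small_box_points dense_small_box_points[OF assms V]
    by (intro exI[of _ "range (\<lambda>k. small_box_points f V (1 / Suc k))"]) auto
  moreover have "\<forall>x\<in>R. (f \<longlongrightarrow> f (x, y0)) (at (x, y0))"
  proof (intro ballI tendsto_at_small_box_points[OF V(1,2)])
    fix x and e :: real assume "x \<in> R" "e > 0"
    obtain k where k: "1 / Suc k < e"
      using reals_Archimedean[OF \<open>e > 0\<close>] by (auto simp: inverse_eq_divide)
    moreover have "x \<in> small_box_points f V (1 / Suc k)" using \<open>x \<in> R\<close> by (simp add: R_def)
    moreover have "small_box_points f V (1 / Suc k) \<subseteq> small_box_points f V e"
      using k by (intro small_box_points_mono) simp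
    ultimately show "x \<in> small_box_points f V e" by blast
  qed
  ultimately show "\<exists>R. residual R \<and> (\<forall>x\<in>R. (f \<longlongrightarrow> f (x, y0)) (at (x, y0)))"
    by (intro exI[of _ R] conjI)
qed

end
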